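(* Consider the stochastic bipartite matching model described in the context, under the stability condition, with stationary distribution $\pi$. Then \[ \sum_{(i,k)\in\mathcal{I}\times\mathcal{K}} \lambda_i\mu_k \sum_{\substack{\mathcal{A}\in\mathcal{J}:\ i\in\mathcal{I}(\mathcal{A}\cap\mathcal{K}),\\ k\in\mathcal{K}(\mathcal{A}\cap\mathcal{I})}} \pi(\mathcal{A}) \;=\; \sum_{\substack{(i,k)\in\mathcal{I}\times\mathcal{K}:\\ i\nsim k}} \lambda_i\mu_k \sum_{\substack{\mathcal{A}\in\mathcal{J}_0:\ i\notin\mathcal{I}(\mathcal{A}\cap\mathcal{K}),\\ k\notin\mathcal{K}(\mathcal{A}\cap\mathcal{I})}} \pi(\mathcal{A}). \]
   Context: Let $\mathcal{I}$ (customer classes) and $\mathcal{K}$ (server classes) be disjoint finite non-empty sets, and consider a connected bipartite graph (the compatibility graph) on $\mathcal{I}\cup\mathcal{K}$ whose edges all join an element of $\mathcal{I}$ to an element of $\mathcal{K}$; write $i\sim k$ if $i\in\mathcal{I}$ and $k\in\mathcal{K}$ are adjacent and $i\nsim k$ otherwise. For $i\in\mathcal{I}$ let $\mathcal{K}_i=\{k\in\mathcal{K}: i\sim k\}$ and for $k\in\mathcal{K}$ let $\mathcal{I}_k=\{i\in\mathcal{I}: i\sim k\}$. Let $\lambda_i>0$ ($i\in\mathcal{I}$) and $\mu_k>0$ ($k\in\mathcal{K}$) with $\sum_i\lambda_i=\sum_k\mu_k=1$. For $\mathcal{A}\subseteq\mathcal{I}$ write $\lambda(\mathcal{A})=\sum_{i\in\mathcal{A}}\lambda_i$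 and $\mathcal{K}(\mathcal{A})=\bigcup_{i\in\mathcal{A}}\mathcal{K}_i$; for $\mathcal{A}\subseteq\mathcal{K}$ write $\mu(\mathcal{A})=\sum_{k\in\mathcal{A}}\mu_k$ and $\mathcal{I}(\mathcal{A})=\bigcup_{k\in\mathcal{A}}\mathcal{I}_k$. Model: time is slotted; in each slot exactly one customer and one server arrive, the customer being of class $i$ with probability $\lambda_i$ and the server of class $k$ with probability $\mu_k$, independently within and across slots. Unmatched customers and unmatched servers wait in two queues in arrival order. Upon each arrival (first-come-first-matched policy): (1) the incoming customer is matched with the longest-waiting compatible unmatched server, if any; (2) the incoming server is matched with the longest-waiting compatible unmatched customer, if any; (3) if neither can be matched with a waiting item, they are matched with each other if compatible; (4) any incoming item still unmatched is appended to the back of its queue. Matched items leave immediately. The state is $(c,d)$ with $c=(c_1,\dots,c_n)$ the classes of unmatched customers and $d=(d_1,\dots,d_n)$ the classes of unmatched servers, in arrival order (the two lengths are always equal); the state space is $\Pi=\bigcup_{n\ge0}\{(c,d)\in\mathcal{I}^n\times\mathcal{K}^n: c_p\nsim d_q\ \forall p,q\}$, and $\varnothing$ denotes the empty state. Stability condition (assumed): $\lambda(\mathcal{A})<\mu(\mathcal{K}(\mathcal{A}))$ for every non-empty $\mathcal{A}\subsetneq\mathcal{I}$ (equivalently $\mu(\mathcal{A})<\lambda(\mathcal{I}(\mathcal{A}))$ for every non-empty $\mathcal{A}\subsetneq\mathcal{K}$). Then the Markov chain of states is ergodic with stationary distribution $\pi(c,d)=\pi(\varnothing)\prod_{p=1}^n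 \frac{\lambda_{c_p}}{\mu(\mathcal{K}(\{c_1,\dots,c_p\}))}\frac{\mu_{d_p}}{\lambda(\mathcal{I}(\{d_1,\dots,d_p\}))}$, $(c,d)\in\Pi$. Let $\mathcal{J}$ be the family of independent sets $\mathcal{A}\subseteq\mathcal{I}\cup\mathcal{K}$ of the compatibility graph such that $\mathcal{A}\cap\mathcal{I}$ and $\mathcal{A}\cap\mathcal{K}$ are both non-empty, and $\mathcal{J}_0=\mathcal{J}\cup\{\emptyset\}$. For $\mathcal{A}\in\mathcal{J}_0$, let $\Pi_{\mathcal{A}}$ be the set of $(c,d)\in\Pi$ with $\{c_1,\dots,c_n\}=\mathcal{A}\cap\mathcal{I}$ and $\{d_1,\dots,d_n\}=\mathcal{A}\cap\mathcal{K}$, and $\pi(\mathcal{A})=\sum_{(c,d)\in\Pi_{\mathcal{A}}}\pi(c,d)$ (for $\mathcal{A}=\emptyset$ this is $\pi(\varnothing)$). *)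

theory Defs
  imports "HOL-Analysis.Analysis"
begin

text \<open>Compatibility graph: customer classes I, server classes K (disjoint by typing),
  compatibility relation E (only its restriction to I x K matters).\<close>

definition Kof :: "('i \<Rightarrow> 'k \<Rightarrow> bool) \<Rightarrow> 'k set \<Rightarrow> 'i set \<Rightarrow> 'k set" where
  "Kof E K A = {k \<in> K. \<exists>i\<in>A. E i k}"

definition Iof :: "('i \<Rightarrow> 'k \<Rightarrow> bool) \<Rightarrow> 'i set \<Rightarrow> 'k set \<Rightarrow> 'i set" where
  "Iof E I B = {i \<in> I. \<exists>k\<in>B. E i k}"

definition adj :: "'i set \<Rightarrow> 'k set \<Rightarrow> ('i \<Rightarrow> 'k \<Rightarrow> bool) \<Rightarrow> 'i + 'k \<Rightarrow> 'i + 'k \<Rightarrow> bool" where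
  "adj I K E u v = (case (u, v) of
      (Inl i, Inr k) \<Rightarrow> i \<in> I \<and> k \<in> K \<and> E i k
    | (Inr k, Inl i) \<Rightarrow> i \<in> I \<and> k \<in> K \<and> E i k
    | _ \<Rightarrow> False)"

definition bip_connected :: "'i set \<Rightarrow> 'k set \<Rightarrow> ('i \<Rightarrow> 'k \<Rightarrow> bool) \<Rightarrow> bool" where
  "bip_connected I K E = (\<forall>u \<in> Inl ` I \<union> Inr ` K. \<forall>v \<in> Inl ` I \<union> Inr ` K. (adj I K E)\<^sup>*\<^sup>* u v)"

definition states :: "'i set \<Rightarrow> 'k set \<Rightarrow> ('i \<Rightarrow> 'k \<Rightarrow> bool) \<Rightarrow> ('i list \<times> 'k list) set" where
  "states I K E = {(c, d). length c = length d \<and> set c \<subseteq> I \<and> set d \<subseteq> K \<and>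
      (\<forall>x\<in>set c. \<forall>y\<in>set d. \<not> E x y)}"

text \<open>Unnormalised product-form weight (pi(c,d)/pi(empty)).\<close>
definition weight :: "'i set \<Rightarrow> 'k set \<Rightarrow> ('i \<Rightarrow> 'k \<Rightarrow> bool) \<Rightarrow> ('i \<Rightarrow> real) \<Rightarrow> ('k \<Rightarrow> real)
    \<Rightarrow> 'i list \<times> 'k list \<Rightarrow> real" where
  "weight I K E lam mu s = (case s of (c, d) \<Rightarrow>
     (\<Prod>p<length c. (lam (c ! p) / sum mu (Kof E K (set (take (Suc p) c))))
                   * (mu (d ! p) / sum lam (Iof E I (set (take (Suc p) d))))))"

definition pi_state :: "'i set \<Rightarrow> 'k set \<Rightarrow> ('i \<Rightarrow> 'k \<Rightarrow> bool) \<Rightarrow> ('i \<Rightarrow> real) \<Rightarrow> ('k \<Rightarrow> real)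
    \<Rightarrow> 'i list \<times> 'k list \<Rightarrow> real" where
  "pi_state I K E lam mu s = weight I K E lam mu s / infsum (weight I K E lam mu) (states I K E)"

text \<open>A set A of the family J_0 is represented as the pair (A \<inter> I, A \<inter> K).\<close>
definition pi_set :: "'i set \<Rightarrow> 'k set \<Rightarrow> ('i \<Rightarrow> 'k \<Rightarrow> bool) \<Rightarrow> ('i \<Rightarrow> real) \<Rightarrow> ('k \<Rightarrow> real)
    \<Rightarrow> 'i set \<times> 'k set \<Rightarrow> real" where
  "pi_set I K E lam mu A = infsum (pi_state I K E lam mu)
      {s \<in> states I K E. set (fst s) = fst A \<and> set (snd s) = snd A}"

definition indepJ :: "'i set \<Rightarrow> 'k set \<Rightarrow> ('i \<Rightarrow> 'k \<Rightarrow> bool) \<Rightarrow> ('i set \<times> 'k set) set" where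
  "indepJ I K E = {(A, B). A \<subseteq> I \<and> B \<subseteq> K \<and> A \<noteq> {} \<and> B \<noteq> {} \<and> (\<forall>i\<in>A. \<forall>k\<in>B. \<not> E i k)}"

definition indepJ0 :: "'i set \<Rightarrow> 'k set \<Rightarrow> ('i \<Rightarrow> 'k \<Rightarrow> bool) \<Rightarrow> ('i set \<times> 'k set) set" where
  "indepJ0 I K E = insert ({}, {}) (indepJ I K E)"

end

theory Submission
  imports Defs
begin

text \<open>Appending to a state \<open>(c, d)\<close> an incompatible pair of classes \<open>(i, k)\<close>, neither of which
  can be matched with the items waiting in \<open>(c, d)\<close>, is a bijection from such pairs onto the
  non-empty states, and the product form gives
  \<open>\<pi>(c @ [i], d @ [k]) \<lambda>(I(d @ [k])) \<mu>(K(c @ [i])) = \<pi>(c, d) \<lambda>\<^sub>i \<mu>\<^sub>k\<close>.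
  Summing over all states, the stationary probability that both arrivals of a slot are matched with
  waiting items (the queues shrink) equals the probability that both are appended to the queues
  (the queues grow). Grouping the states by the sets of classes they contain turns these two
  probabilities into the two sides of the corollary.\<close>

lemma has_sum_sum:
  fixes f :: "'a \<Rightarrow> 'b \<Rightarrow> 'c::topological_comm_monoid_add"
  assumes "finite P" and "\<And>x. x \<in> P \<Longrightarrow> (f x has_sum a x) A"
  shows "((\<lambda>s. \<Sum>x\<in>P. f x s) has_sum (\<Sum>x\<in>P. a x)) A"
  using assms by (induction P rule: finite_induct) (auto intro: has_sum_add)

lemma sum_mult_infsum_filter:
  fixes p :: "'s \<Rightarrow> real" and g :: "'x \<Rightarrow> real"
  assumes "p summable_on S" and "finite P"
  shows "(\<Sum>x\<in>P. g x * infsum p {s \<in> S. Q x s}) = infsum (\<lambda>s. p s * (\<Sum>x\<in>{x \<in> P. Q x s}. g x)) S"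
proof -
  have "((\<lambda>s. if Q x s then p s else 0) has_sum infsum p {s \<in> S. Q x s}) S" for x
  proof -
    have "(p has_sum infsum p {s \<in> S. Q x s}) {s \<in> S. Q x s}"
      using summable_on_subset_banach[OF assms(1), of "{s \<in> S. Q x s}"] by simp
    then show ?thesis by (rule has_sum_cong_neutral[THEN iffD1, rotated -1]) auto
  qed
  then have "((\<lambda>s. \<Sum>x\<in>P. g x * (if Q x s then p s else 0)) has_sum (\<Sum>x\<in>P. g x * infsum p {s \<in> S. Q x s})) S"
    by (intro has_sum_sum has_sum_cmult_right assms(2))
  moreover have "(\<Sum>x\<in>P. g x * (if Q x s then p s else 0)) = p s * (\<Sum>x\<in>{x \<in> P. Q x s}. g x)" for s
    by (simp add: sum_distrib_left sum.inter_filter[OF assms(2), symmetric] if_distrib mult.commute cong: if_cong)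
  ultimately show ?thesis by (simp add: infsumI)
qed

lemma bip_connected_ex_compatible_server:
  assumes "bip_connected I K E" and "K \<noteq> {}" and "i \<in> I"
  shows "\<exists>k\<in>K. E i k"
proof -
  obtain k0 where "k0 \<in> K" using assms(2) by blast
  then have "(adj I K E)\<^sup>*\<^sup>* (Inl i) (Inr k0)" using assms unfolding bip_connected_def by blast
  then show ?thesis
    by (cases rule: converse_rtranclpE) (auto simp: adj_def split: sum.splits)
qed

lemma bip_connected_ex_compatible_customer:
  assumes "bip_connected I K E" and "I \<noteq> {}" and "k \<in> K"
  shows "\<exists>i\<in>I. E i k"
proof -
  obtain i0 where "i0 \<in> I" using assms(2) by blast
  then have "(adj I K E)\<^sup>*\<^sup>* (Inr k) (Inl i0)" using assms unfolding bip_connected_def by blast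
  then show ?thesis
    by (cases rule: converse_rtranclpE) (auto simp: adj_def split: sum.splits)
qed

lemma sum_Kof_pos:
  fixes mu :: "'k \<Rightarrow> real"
  assumes "finite K" and "\<forall>k\<in>K. mu k > 0" and "\<forall>i\<in>I. \<exists>k\<in>K. E i k"
    and "A \<subseteq> I" and "A \<noteq> {}"
  shows "sum mu (Kof E K A) > 0"
proof -
  obtain i k where "i \<in> A" "k \<in> K" "E i k" using assms(3-5) by blast
  then have "k \<in> Kof E K A" unfolding Kof_def by blast
  moreover have "finite (Kof E K A)"
    using assms(1) unfolding Kof_def by auto
  ultimately show ?thesis
    using assms(2) by (intro sum_pos2[where i=k]) (auto simp: Kof_def less_imp_le)
qed

lemma sum_Iof_pos:
  fixes lam :: "'i \<Rightarrow> real"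
  assumes "finite I" and "\<forall>i\<in>I. lam i > 0" and "\<forall>k\<in>K. \<exists>i\<in>I. E i k"
    and "B \<subseteq> K" and "B \<noteq> {}"
  shows "sum lam (Iof E I B) > 0"
proof -
  obtain i k where "k \<in> B" "i \<in> I" "E i k" using assms(3-5) by blast
  then have "i \<in> Iof E I B" unfolding Iof_def by blast
  moreover have "finite (Iof E I B)"
    using assms(1) unfolding Iof_def by auto
  ultimately show ?thesis
    using assms(2) by (intro sum_pos2[where i=i]) (auto simp: Iof_def less_imp_le)
qed

definition extensions :: "'i set \<Rightarrow> 'k set \<Rightarrow> ('i \<Rightarrow> 'k \<Rightarrow> bool) \<Rightarrow> 'i list \<times> 'k list \<Rightarrow> ('i \<times> 'k) set" where
  "extensions I K E s = {(i, k) \<in> I \<times> K. \<not> E i k \<and> i \<notin> Iof E I (set (snd s)) \<and> k \<notin> Kof E K (set (fst s))}"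

text \<open>In state \<open>s\<close>, \<open>shrink_prob\<close> is the probability that the arriving customer and the arriving
  server are both matched with waiting items, \<open>grow_prob\<close> the probability that both are appended
  to the queues.\<close>

definition grow_prob :: "'i set \<Rightarrow> 'k set \<Rightarrow> ('i \<Rightarrow> 'k \<Rightarrow> bool) \<Rightarrow> ('i \<Rightarrow> real) \<Rightarrow> ('k \<Rightarrow> real)
    \<Rightarrow> 'i list \<times> 'k list \<Rightarrow> real" where
  "grow_prob I K E lam mu s = (\<Sum>(i, k)\<in>extensions I K E s. lam i * mu k)"

definition shrink_prob :: "'i set \<Rightarrow> 'k set \<Rightarrow> ('i \<Rightarrow> 'k \<Rightarrow> bool) \<Rightarrow> ('i \<Rightarrow> real) \<Rightarrow> ('k \<Rightarrow> real)
    \<Rightarrow> 'i list \<times> 'k list \<Rightarrow> real" where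
  "shrink_prob I K E lam mu s = sum lam (Iof E I (set (snd s))) * sum mu (Kof E K (set (fst s)))"

lemma snoc_in_states_iff:
  "(c @ [i], d @ [k]) \<in> states I K E \<longleftrightarrow> (c, d) \<in> states I K E \<and> (i, k) \<in> extensions I K E (c, d)"
  unfolding states_def extensions_def Iof_def Kof_def by auto

lemma has_sum_states_snoc_reindex:
  "(f has_sum x) (states I K E - {([], [])}) \<longleftrightarrow>
   ((\<lambda>(s, i, k). f (fst s @ [i], snd s @ [k])) has_sum x) (Sigma (states I K E) (extensions I K E))"
proof (rule has_sum_reindex_bij_witness[where i = "\<lambda>(c, d). ((butlast c, butlast d), last c, last d)"
      and j = "\<lambda>(s, i, k). (fst s @ [i], snd s @ [k])", symmetric])
  fix s assume s: "s \<in> states I K E - {([], [])}"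
  obtain c d where cd: "s = (c, d)" by (cases s)
  with s have "c \<noteq> []" and "d \<noteq> []" unfolding states_def by auto
  with cd show "(\<lambda>(s, i, k). (fst s @ [i], snd s @ [k])) ((\<lambda>(c, d). ((butlast c, butlast d), last c, last d)) s) = s"
    by simp
  show "(\<lambda>(c, d). ((butlast c, butlast d), last c, last d)) s \<in> Sigma (states I K E) (extensions I K E)"
    using s \<open>c \<noteq> []\<close> \<open>d \<noteq> []\<close> snoc_in_states_iff[of "butlast c" "last c" "butlast d" "last d" I K E]
    unfolding cd by simp
qed (auto simp: snoc_in_states_iff)

lemma weight_snoc:
  assumes "length c = length d"
  shows "weight I K E lam mu (c @ [i], d @ [k]) = weight I K E lam mu (c, d) *
     (lam i / sum mu (Kof E K (insert i (set c))) * (mu k / sum lam (Iof E I (insert k (set d)))))"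
proof -
  have "(\<Prod>p<length c. lam ((c @ [i]) ! p) / sum mu (Kof E K (set (take (Suc p) (c @ [i]))))
                   * (mu ((d @ [k]) ! p) / sum lam (Iof E I (set (take (Suc p) (d @ [k]))))))
     = (\<Prod>p<length c. lam (c ! p) / sum mu (Kof E K (set (take (Suc p) c)))
                   * (mu (d ! p) / sum lam (Iof E I (set (take (Suc p) d)))))"
    by (rule prod.cong) (auto simp: nth_append assms)
  then show ?thesis
    unfolding weight_def using assms by (simp add: nth_append)
qed

lemma weight_nonneg:
  fixes lam :: "'i \<Rightarrow> real" and mu :: "'k \<Rightarrow> real"
  assumes "\<forall>i\<in>I. lam i \<ge> 0" and "\<forall>k\<in>K. mu k \<ge> 0" and "s \<in> states I K E"
  shows "weight I K E lam mu s \<ge> 0"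
proof -
  obtain c d where s: "s = (c, d)" by (cases s)
  with assms(3) have cI: "set c \<subseteq> I" and dK: "set d \<subseteq> K" and "length c = length d"
    unfolding states_def by auto
  then have "lam (c ! q) \<ge> 0" "mu (d ! q) \<ge> 0" if "q < length c" for q
    using assms(1,2) that by (metis cI nth_mem subsetD, metis dK nth_mem subsetD)
  moreover have "sum mu (Kof E K X) \<ge> 0" "sum lam (Iof E I Y) \<ge> 0" for X Y
    using assms(1,2) by (auto simp: Kof_def Iof_def intro: sum_nonneg)
  ultimately show ?thesis
    unfolding s weight_def by (auto intro!: prod_nonneg mult_nonneg_nonneg divide_nonneg_nonneg)
qed

lemma shrink_prob_bounds:
  fixes lam :: "'i \<Rightarrow> real" and mu :: "'k \<Rightarrow> real"
  assumes "finite I" and "finite K" and "\<forall>i\<in>I. lam i \<ge> 0" and "\<forall>k\<in>K. mu k \<ge> 0"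
  shows "0 \<le> shrink_prob I K E lam mu s" and "shrink_prob I K E lam mu s \<le> sum lam I * sum mu K"
proof -
  have "0 \<le> sum lam (Iof E I B)" "sum lam (Iof E I B) \<le> sum lam I" for B
    using assms by (auto simp: Iof_def intro: sum_nonneg sum_mono2)
  moreover have "0 \<le> sum mu (Kof E K A)" "sum mu (Kof E K A) \<le> sum mu K" for A
    using assms by (auto simp: Kof_def intro: sum_nonneg sum_mono2)
  ultimately show "0 \<le> shrink_prob I K E lam mu s" "shrink_prob I K E lam mu s \<le> sum lam I * sum mu K"
    unfolding shrink_prob_def by (auto intro: mult_mono' mult_nonneg_nonneg)
qed

lemma weight_shrink_prob_snoc:
  fixes lam :: "'i \<Rightarrow> real" and mu :: "'k \<Rightarrow> real"
  assumes "finite I" and "finite K" and "\<forall>i\<in>I. lam i > 0" and "\<forall>k\<in>K. mu k > 0"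
    and "\<forall>i\<in>I. \<exists>k\<in>K. E i k" and "\<forall>k\<in>K. \<exists>i\<in>I. E i k"
    and "(c @ [i], d @ [k]) \<in> states I K E"
  shows "weight I K E lam mu (c @ [i], d @ [k]) * shrink_prob I K E lam mu (c @ [i], d @ [k])
       = weight I K E lam mu (c, d) * (lam i * mu k)"
proof -
  from assms(7) have "length c = length d" and "insert i (set c) \<subseteq> I" and "insert k (set d) \<subseteq> K"
    unfolding states_def by auto
  moreover from this have "sum mu (Kof E K (insert i (set c))) > 0" and "sum lam (Iof E I (insert k (set d))) > 0"
    using assms(1-6) by (auto intro: sum_Kof_pos sum_Iof_pos)
  ultimately show ?thesis
    unfolding shrink_prob_def by (simp add: weight_snoc)
qed

lemma infsum_weight_shrink_prob_eq_grow_prob: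
  fixes lam :: "'i \<Rightarrow> real" and mu :: "'k \<Rightarrow> real"
  assumes "finite I" and "finite K" and "\<forall>i\<in>I. lam i > 0" and "\<forall>k\<in>K. mu k > 0"
    and "\<forall>i\<in>I. \<exists>k\<in>K. E i k" and "\<forall>k\<in>K. \<exists>i\<in>I. E i k"
    and "weight I K E lam mu summable_on states I K E"
  shows "infsum (\<lambda>s. weight I K E lam mu s * shrink_prob I K E lam mu s) (states I K E)
       = infsum (\<lambda>s. weight I K E lam mu s * grow_prob I K E lam mu s) (states I K E)"
    (is "infsum ?f ?St = _")
proof -
  let ?w = "weight I K E lam mu"
  have nonneg: "\<forall>i\<in>I. lam i \<ge> 0" "\<forall>k\<in>K. mu k \<ge> 0"
    using assms(3,4) by auto
  have "?f summable_on ?St"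
  proof (rule summable_on_comparison_test)
    show "(\<lambda>s. ?w s * (sum lam I * sum mu K)) summable_on ?St"
      using assms(7) by (rule summable_on_cmult_left)
  qed (use shrink_prob_bounds[OF assms(1,2) nonneg] weight_nonneg[OF nonneg] in \<open>auto intro: mult_left_mono\<close>)
  then have "(?f has_sum infsum ?f ?St) (?St - {([], [])})"
    by (rule has_sum_infsum[THEN has_sum_cong_neutral[THEN iffD1, rotated -1]])
      (auto simp: shrink_prob_def Iof_def)
  then have Sigma_sum: "((\<lambda>(s, i, k). ?w s * (lam i * mu k)) has_sum infsum ?f ?St) (Sigma ?St (extensions I K E))"
    unfolding has_sum_states_snoc_reindex
    by (rule has_sum_cong[THEN iffD1, rotated])
      (auto simp: weight_shrink_prob_snoc[OF assms(1-6)] snoc_in_states_iff)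
  have "infsum ?f ?St = infsum (\<lambda>(s, i, k). ?w s * (lam i * mu k)) (Sigma ?St (extensions I K E))"
    using Sigma_sum by (rule infsumI[symmetric])
  also have "\<dots> = infsum (\<lambda>s. infsum (\<lambda>(i, k). ?w s * (lam i * mu k)) (extensions I K E s)) ?St"
    using infsum_Sigma'_banach[of "\<lambda>s (i, k). ?w s * (lam i * mu k)" ?St "extensions I K E"]
      has_sum_imp_summable[OF Sigma_sum] by (simp add: case_prod_unfold)
  also have "\<dots> = infsum (\<lambda>s. ?w s * grow_prob I K E lam mu s) ?St"
  proof (rule infsum_cong)
    fix s
    have "finite (extensions I K E s)"
      using assms(1,2) by (auto simp: extensions_def intro: finite_subset[of _ "I \<times> K"])
    then show "infsum (\<lambda>(i, k). ?w s * (lam i * mu k)) (extensions I K E s) = ?w s * grow_prob I K E lam mu s"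
      by (simp add: grow_prob_def sum_distrib_left case_prod_unfold)
  qed
  finally show ?thesis .
qed

lemma summable_on_pi_state: "pi_state I K E lam mu summable_on states I K E"
proof (cases "weight I K E lam mu summable_on states I K E")
  case True
  then show ?thesis
    unfolding pi_state_def divide_inverse by (rule summable_on_cmult_left)
next
  case False
  then show ?thesis
    unfolding pi_state_def infsum_not_exists[OF False] by simp
qed

lemma infsum_pi_state_mult:
  "infsum (\<lambda>s. pi_state I K E lam mu s * f s) (states I K E)
     = infsum (\<lambda>s. weight I K E lam mu s * f s) (states I K E) / infsum (weight I K E lam mu) (states I K E)"
  unfolding pi_state_def divide_inverse
  by (subst infsum_cmult_left'[symmetric]) (simp add: ac_simps)

lemma infsum_pi_state_shrink_prob_eq_grow_prob:
  fixes lam :: "'i \<Rightarrow> real" and mu :: "'k \<Rightarrow> real"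
  assumes "finite I" and "finite K" and "\<forall>i\<in>I. lam i > 0" and "\<forall>k\<in>K. mu k > 0"
    and "\<forall>i\<in>I. \<exists>k\<in>K. E i k" and "\<forall>k\<in>K. \<exists>i\<in>I. E i k"
  shows "infsum (\<lambda>s. pi_state I K E lam mu s * shrink_prob I K E lam mu s) (states I K E)
       = infsum (\<lambda>s. pi_state I K E lam mu s * grow_prob I K E lam mu s) (states I K E)"
proof (cases "weight I K E lam mu summable_on states I K E")
  case True
  then show ?thesis
    by (simp add: infsum_pi_state_mult infsum_weight_shrink_prob_eq_grow_prob[OF assms])
next
  case False
  then show ?thesis
    by (simp add: infsum_pi_state_mult infsum_not_exists)
qed

lemma finite_indepJ0:
  assumes "finite I" and "finite K"
  shows "finite (indepJ0 I K E)"
proof -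
  have "indepJ0 I K E \<subseteq> Pow I \<times> Pow K"
    unfolding indepJ0_def indepJ_def by auto
  then show ?thesis
    by (rule finite_subset) (use assms in simp)
qed

lemma states_support_in_indepJ0:
  assumes "s \<in> states I K E"
  shows "(set (fst s), set (snd s)) \<in> indepJ0 I K E"
  using assms unfolding states_def indepJ0_def indepJ_def by (cases s) auto

lemma states_support_in_indepJ_iff:
  assumes "s \<in> states I K E"
  shows "(set (fst s), set (snd s)) \<in> indepJ I K E \<longleftrightarrow> fst s \<noteq> []"
  using assms unfolding states_def indepJ_def by (cases s) auto

lemma sum_pi_set_eq_infsum:
  assumes "finite \<A>"
  shows "(\<Sum>A\<in>\<A>. pi_set I K E lam mu A)
       = infsum (pi_state I K E lam mu) {s \<in> states I K E. (set (fst s), set (snd s)) \<in> \<A>}"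
proof -
  have "(\<Union>A\<in>\<A>. {s \<in> states I K E. set (fst s) = fst A \<and> set (snd s) = snd A})
      = {s \<in> states I K E. (set (fst s), set (snd s)) \<in> \<A>}"
    by auto
  moreover have "(\<Sum>A\<in>\<A>. pi_set I K E lam mu A)
      = infsum (pi_state I K E lam mu) (\<Union>A\<in>\<A>. {s \<in> states I K E. set (fst s) = fst A \<and> set (snd s) = snd A})"
    unfolding pi_set_def using assms
    by (rule sum_infsum) (auto intro: summable_on_subset_banach[OF summable_on_pi_state])
  ultimately show ?thesis by simp
qed

lemma sum_pairs_pi_set_eq_infsum:
  assumes "finite P" and "\<And>i k. (i, k) \<in> P \<Longrightarrow> finite (\<A> i k)"
    and "\<And>i k s. (i, k) \<in> P \<Longrightarrow> s \<in> states I K E \<Longrightarrow> (set (fst s), set (snd s)) \<in> \<A> i k \<longleftrightarrow> Q i k s"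
  shows "(\<Sum>(i, k)\<in>P. lam i * mu k * (\<Sum>A\<in>\<A> i k. pi_set I K E lam mu A))
       = infsum (\<lambda>s. pi_state I K E lam mu s * (\<Sum>(i, k)\<in>{(i, k) \<in> P. Q i k s}. lam i * mu k)) (states I K E)"
proof -
  have "(\<Sum>(i, k)\<in>P. lam i * mu k * (\<Sum>A\<in>\<A> i k. pi_set I K E lam mu A))
      = (\<Sum>x\<in>P. lam (fst x) * mu (snd x) * infsum (pi_state I K E lam mu) {s \<in> states I K E. Q (fst x) (snd x) s})"
  proof (rule sum.cong[OF refl], clarify)
    fix i k assume ik: "(i, k) \<in> P"
    then have "{s \<in> states I K E. (set (fst s), set (snd s)) \<in> \<A> i k} = {s \<in> states I K E. Q i k s}"
      using assms(3) by blast
    then show "lam i * mu k * (\<Sum>A\<in>\<A> i k. pi_set I K E lam mu A)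
        = lam (fst (i, k)) * mu (snd (i, k)) * infsum (pi_state I K E lam mu) {s \<in> states I K E. Q (fst (i, k)) (snd (i, k)) s}"
      using assms(2)[OF ik] by (simp add: sum_pi_set_eq_infsum)
  qed
  also have "\<dots> = infsum (\<lambda>s. pi_state I K E lam mu s * (\<Sum>x\<in>{x \<in> P. Q (fst x) (snd x) s}. lam (fst x) * mu (snd x))) (states I K E)"
    by (rule sum_mult_infsum_filter[OF summable_on_pi_state assms(1)])
  finally show ?thesis by (simp add: case_prod_unfold)
qed

lemma sum_pairs_eq_shrink_prob:
  "(\<Sum>(i, k)\<in>{(i, k) \<in> I \<times> K. i \<in> Iof E I (set (snd s)) \<and> k \<in> Kof E K (set (fst s))}. lam i * mu k)
     = shrink_prob I K E lam mu s"
proof -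
  have "{(i, k) \<in> I \<times> K. i \<in> Iof E I (set (snd s)) \<and> k \<in> Kof E K (set (fst s))}
      = Iof E I (set (snd s)) \<times> Kof E K (set (fst s))"
    by (auto simp: Iof_def Kof_def)
  then show ?thesis
    by (simp add: shrink_prob_def sum_product sum.cartesian_product)
qed

theorem corollary1:
  fixes I :: "'i set" and K :: "'k set" and E :: "'i \<Rightarrow> 'k \<Rightarrow> bool"
    and lam :: "'i \<Rightarrow> real" and mu :: "'k \<Rightarrow> real"
  assumes "finite I" and "finite K" and "I \<noteq> {}" and "K \<noteq> {}"
    and "bip_connected I K E"
    and "\<forall>i\<in>I. lam i > 0" and "\<forall>k\<in>K. mu k > 0"
    and "sum lam I = 1" and "sum mu K = 1"
    and "\<forall>A. A \<subseteq> I \<and> A \<noteq> {} \<and> A \<noteq> I \<longrightarrow> sum lam A < sum mu (Kof E K A)"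
  shows "(\<Sum>(i, k)\<in>I \<times> K. lam i * mu k *
            (\<Sum>A\<in>{A \<in> indepJ I K E. i \<in> Iof E I (snd A) \<and> k \<in> Kof E K (fst A)}.
               pi_set I K E lam mu A))
       = (\<Sum>(i, k)\<in>{(i, k) \<in> I \<times> K. \<not> E i k}. lam i * mu k *
            (\<Sum>A\<in>{A \<in> indepJ0 I K E. i \<notin> Iof E I (snd A) \<and> k \<notin> Kof E K (fst A)}.
               pi_set I K E lam mu A))"
proof -
  let ?pi = "pi_state I K E lam mu" and ?St = "states I K E"
  have servers: "\<forall>i\<in>I. \<exists>k\<in>K. E i k"
    using bip_connected_ex_compatible_server[OF assms(5,4)] by blast
  have customers: "\<forall>k\<in>K. \<exists>i\<in>I. E i k"
    using bip_connected_ex_compatible_customer[OF assms(5,3)] by blast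
  have finite_indep: "finite {A \<in> indepJ0 I K E. P A}" "finite {A \<in> indepJ I K E. P A}" for P
    using finite_indepJ0[OF assms(1,2), of E] by (auto simp: indepJ0_def intro: finite_subset)
  have "(\<Sum>(i, k)\<in>I \<times> K. lam i * mu k *
            (\<Sum>A\<in>{A \<in> indepJ I K E. i \<in> Iof E I (snd A) \<and> k \<in> Kof E K (fst A)}. pi_set I K E lam mu A))
      = infsum (\<lambda>s. ?pi s * (\<Sum>(i, k)\<in>{(i, k) \<in> I \<times> K. i \<in> Iof E I (set (snd s)) \<and> k \<in> Kof E K (set (fst s))}.
            lam i * mu k)) ?St"
    using assms(1,2) finite_indep
    by (intro sum_pairs_pi_set_eq_infsum) (auto simp: states_support_in_indepJ_iff Kof_def)
  also have "\<dots> = infsum (\<lambda>s. ?pi s * shrink_prob I K E lam mu s) ?St"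
    by (simp only: sum_pairs_eq_shrink_prob)
  also have "\<dots> = infsum (\<lambda>s. ?pi s * grow_prob I K E lam mu s) ?St"
    using assms(1,2,6,7) servers customers by (rule infsum_pi_state_shrink_prob_eq_grow_prob)
  also have "\<dots> = infsum (\<lambda>s. ?pi s * (\<Sum>(i, k)\<in>{(i, k) \<in> {(i, k) \<in> I \<times> K. \<not> E i k}.
            i \<notin> Iof E I (set (snd s)) \<and> k \<notin> Kof E K (set (fst s))}. lam i * mu k)) ?St"
    unfolding grow_prob_def extensions_def by (intro infsum_cong arg_cong2[where f = "(*)"] sum.cong) auto
  also have "\<dots> = (\<Sum>(i, k)\<in>{(i, k) \<in> I \<times> K. \<not> E i k}. lam i * mu k *
            (\<Sum>A\<in>{A \<in> indepJ0 I K E. i \<notin> Iof E I (snd A) \<and> k \<notin> Kof E K (fst A)}. pi_set I K E lam mu A))"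
    using finite_subset[of "{(i, k) \<in> I \<times> K. \<not> E i k}" "I \<times> K"] assms(1,2) finite_indep
    by (intro sum_pairs_pi_set_eq_infsum[symmetric]) (auto simp: states_support_in_indepJ0)
  finally show ?thesis .
qed

end
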